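(* Let $T>0$, $N=2$, $M=2$. Consider minimizing $\mathbb V(T)=\frac12(\xi_1(T)^2+\xi_2(T)^2)$ over $\alpha\in\mathcal U_2$, where $\dot\xi_i=-\xi_i+(1-\alpha_i)\bar\xi$, $\bar\xi=\frac12(\xi_1+\xi_2)$, with $\bar\xi(0)>0$ and $\xi_1(0)>\xi_2(0)$. Let $\alpha$ be an optimal control whose trajectory satisfies $\xi_1(t)\ge\xi_2(t)$ for all $t$, and let $(\lambda_1,\lambda_2)$ be the corresponding covectors given by the Pontryagin maximum principle: $$\dot\lambda_1=\tfrac{1+\alpha_1}{2}\lambda_1-\tfrac{1-\alpha_2}{2}\lambda_2,\quad \dot\lambda_2=\tfrac{1+\alpha_2}{2}\lambda_2-\tfrac{1-\alpha_1}{2}\lambda_1,\quad \lambda(T)=(\xi_1(T),\xi_2(T)),$$ and for almost every $t$, $\alpha(t)$ minimizes $a\mapsto-\bar\xi(t)(a_1\lambda_1(t)+a_2\lambda_2(t))$ over $a\in[0,1]^2$, $a_1+a_2\le2$. Then: (i) if $\lambda_2(T)>0$, then $\lambda_1(t)>0$ and $\lambda_2(t)>0$ for all $t\in[0,T]$; (ii) if $\lambda_2(T)=0$, then $\lambda_1(t)>0$ and $\lambda_2(t)=0$ for all $t\in[0,T]$; (iii) if $\lambda_2(T)<0$, then $\lambda_2(t)<0$ for all $t\in[0,T]$.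
   Context: $\mathcal U_2$ is the set of measurable $\alpha:[0,T]\to[0,1]^2$ with $\alpha_1+\alpha_2\le2$. *)

theory Defs
  imports "HOL-Analysis.Analysis"
begin

definition admissible :: "real \<Rightarrow> (real \<Rightarrow> real) \<Rightarrow> (real \<Rightarrow> real) \<Rightarrow> bool" where
  "admissible T a1 a2 \<longleftrightarrow>
     a1 \<in> borel_measurable (restrict_space lborel {0..T}) \<and>
     a2 \<in> borel_measurable (restrict_space lborel {0..T}) \<and>
     (\<forall>t\<in>{0..T}. 0 \<le> a1 t \<and> a1 t \<le> 1 \<and> 0 \<le> a2 t \<and> a2 t \<le> 1 \<and> a1 t + a2 t \<le> 2)"

definition xbar :: "real \<Rightarrow> real \<Rightarrow> real" where
  "xbar u v = (u + v) / 2"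

text \<open>(x1,x2) solves x_i' = -x_i + (1 - a_i) xbar on [0,T] (Caratheodory / integral sense).\<close>
definition trajectory :: "real \<Rightarrow> (real \<Rightarrow> real) \<Rightarrow> (real \<Rightarrow> real) \<Rightarrow> (real \<Rightarrow> real) \<Rightarrow> (real \<Rightarrow> real) \<Rightarrow> bool" where
  "trajectory T a1 a2 x1 x2 \<longleftrightarrow>
     (\<forall>t\<in>{0..T}.
        ((\<lambda>s. - x1 s + (1 - a1 s) * xbar (x1 s) (x2 s)) has_integral (x1 t - x1 0)) {0..t} \<and>
        ((\<lambda>s. - x2 s + (1 - a2 s) * xbar (x1 s) (x2 s)) has_integral (x2 t - x2 0)) {0..t})"

definition cost :: "real \<Rightarrow> (real \<Rightarrow> real) \<Rightarrow> (real \<Rightarrow> real) \<Rightarrow> real" where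
  "cost T x1 x2 = (x1 T ^ 2 + x2 T ^ 2) / 2"

definition optimal :: "real \<Rightarrow> (real \<Rightarrow> real) \<Rightarrow> (real \<Rightarrow> real) \<Rightarrow> (real \<Rightarrow> real) \<Rightarrow> (real \<Rightarrow> real) \<Rightarrow> bool" where
  "optimal T a1 a2 x1 x2 \<longleftrightarrow>
     admissible T a1 a2 \<and> trajectory T a1 a2 x1 x2 \<and>
     (\<forall>b1 b2 y1 y2. admissible T b1 b2 \<and> trajectory T b1 b2 y1 y2 \<and>
        y1 0 = x1 0 \<and> y2 0 = x2 0 \<longrightarrow> cost T x1 x2 \<le> cost T y1 y2)"

definition costate :: "real \<Rightarrow> (real \<Rightarrow> real) \<Rightarrow> (real \<Rightarrow> real) \<Rightarrow> (real \<Rightarrow> real) \<Rightarrow> (real \<Rightarrow> real)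
     \<Rightarrow> (real \<Rightarrow> real) \<Rightarrow> (real \<Rightarrow> real) \<Rightarrow> bool" where
  "costate T a1 a2 x1 x2 l1 l2 \<longleftrightarrow>
     (\<forall>t\<in>{0..T}.
        ((\<lambda>s. (1 + a1 s) / 2 * l1 s - (1 - a2 s) / 2 * l2 s) has_integral (l1 t - l1 0)) {0..t} \<and>
        ((\<lambda>s. (1 + a2 s) / 2 * l2 s - (1 - a1 s) / 2 * l1 s) has_integral (l2 t - l2 0)) {0..t}) \<and>
     l1 T = x1 T \<and> l2 T = x2 T"

definition min_condition :: "real \<Rightarrow> (real \<Rightarrow> real) \<Rightarrow> (real \<Rightarrow> real) \<Rightarrow> (real \<Rightarrow> real) \<Rightarrow> (real \<Rightarrow> real)
     \<Rightarrow> (real \<Rightarrow> real) \<Rightarrow> (real \<Rightarrow> real) \<Rightarrow> bool" where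
  "min_condition T a1 a2 x1 x2 l1 l2 \<longleftrightarrow>
     (AE t in lborel. t \<in> {0..T} \<longrightarrow>
        (\<forall>b1 b2. 0 \<le> b1 \<and> b1 \<le> 1 \<and> 0 \<le> b2 \<and> b2 \<le> 1 \<and> b1 + b2 \<le> 2 \<longrightarrow>
           - xbar (x1 t) (x2 t) * (a1 t * l1 t + a2 t * l2 t)
             \<le> - xbar (x1 t) (x2 t) * (b1 * l1 t + b2 * l2 t)))"

end

theory Submission
  imports Defs
begin

text \<open>
  The mean state obeys \<open>xbar' = -((a1 + a2)/2) xbar\<close> and the gap obeys \<open>(l1 - l2)' = l1 - l2\<close>;
  both are linear with bounded coefficients, so a Gronwall-type uniqueness argument shows that
  neither can reach zero from a nonzero value. Hence \<open>xbar > 0\<close> throughout, and \<open>l1 \<ge> l2\<close>, strictly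
  if \<open>x1 T > x2 T\<close>. Positivity of \<open>xbar\<close> turns the minimum condition into \<open>a1 = 1\<close> wherever
  \<open>l1 > 0\<close>, so \<open>(1 - a1) l1 \<le> 0\<close>, with equality when \<open>l1 \<ge> 0\<close>. Therefore \<open>l2' \<ge> l2\<close> where
  \<open>l2 \<le> 0\<close>, \<open>l2' \<le> l2\<close> where \<open>l2 \<ge> 0\<close> (there \<open>l1 \<ge> l2 \<ge> 0\<close>), and \<open>|l2'| \<le> |l2|\<close> where \<open>l1 > 0\<close>.
  The same uniqueness argument, applied just after the last time \<open>l2\<close> has the wrong sign, gives
  cases (i) and (iii); in case (ii) \<open>x1 T > 0 = x2 T\<close>, so the gap is bounded away from zero,
  \<open>l1 > 0\<close> near every zero of \<open>l2\<close>, and the zero set of \<open>l2\<close> is open as well as closed.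
\<close>

lemma AE_lborel_negligible:
  assumes "AE x in lborel. P x"
  obtains N where "negligible N" "\<And>x. x \<notin> N \<Longrightarrow> P x"
proof -
  have "AE x in lebesgue. P x" using AE_completion[OF assms] .
  then obtain N where "negligible N" "{x. \<not> P x} \<subseteq> N"
    by (auto simp: eventually_ae_filter_negligible)
  then show thesis using that by blast
qed

lemma has_integral_le_AE:
  fixes f g :: "'n::euclidean_space \<Rightarrow> real"
  assumes "(f has_integral i) S" "(g has_integral j) S"
    and "AE x in lborel. x \<in> S \<longrightarrow> f x \<le> g x"
  shows "i \<le> j"
proof -
  obtain N where N: "negligible N" "\<And>x. x \<notin> N \<Longrightarrow> x \<in> S \<longrightarrow> f x \<le> g x"
    using AE_lborel_negligible[OF assms(3)] by blast
  let ?f = "\<lambda>x. if x \<in> N then g x else f x"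
  have "(?f has_integral i) S"
    by (rule has_integral_spike[OF N(1) _ assms(1)]) auto
  then show ?thesis
    by (rule has_integral_le[OF _ assms(2)]) (use N(2) in auto)
qed

lemma has_integral_le_const_AE:
  fixes g :: "real \<Rightarrow> real"
  assumes "(g has_integral I) {u..v}" "u \<le> v" "AE x in lborel. x \<in> {u..v} \<longrightarrow> g x \<le> B"
  shows "I \<le> B * (v - u)"
  using has_integral_le_AE[OF assms(1) has_integral_const_real assms(3)] assms(2)
  by (simp add: mult.commute)

lemma has_integral_ge_const_AE:
  fixes g :: "real \<Rightarrow> real"
  assumes "(g has_integral I) {u..v}" "u \<le> v" "AE x in lborel. x \<in> {u..v} \<longrightarrow> B \<le> g x"
  shows "B * (v - u) \<le> I"
  using has_integral_le_AE[OF has_integral_const_real assms(1) assms(3)] assms(2)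
  by (simp add: mult.commute)

definition primitive_on :: "real \<Rightarrow> (real \<Rightarrow> real) \<Rightarrow> (real \<Rightarrow> real) \<Rightarrow> bool" where
  "primitive_on T g f \<longleftrightarrow> (\<forall>t\<in>{0..T}. (g has_integral (f t - f 0)) {0..t})"

lemma primitive_on_has_integral:
  assumes "primitive_on T g f" "0 \<le> u" "u \<le> v" "v \<le> T"
  shows "(g has_integral (f v - f u)) {u..v}"
proof -
  have gv: "(g has_integral (f v - f 0)) {0..v}" and gu: "(g has_integral (f u - f 0)) {0..u}"
    using assms by (auto simp: primitive_on_def)
  have "g integrable_on {u..v}"
    using integrable_subinterval_real[OF has_integral_integrable[OF gv]] assms by auto
  then have gi: "(g has_integral integral {u..v} g) {u..v}" by (rule integrable_integral)
  have "(g has_integral (f u - f 0 + integral {u..v} g)) {0..v}"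
    by (rule has_integral_combine[OF assms(2,3) gu gi])
  then have "f v - f 0 = f u - f 0 + integral {u..v} g"
    using gv by (rule has_integral_unique[rotated])
  then show ?thesis using gi by simp
qed

lemma primitive_on_continuous:
  assumes "primitive_on T g f"
  shows "continuous_on {0..T} f"
proof -
  have "g integrable_on {0..T}"
    using assms by (cases "0 \<le> T") (auto simp: primitive_on_def)
  then have "continuous_on {0..T} (\<lambda>t. f 0 + integral {0..t} g)"
    by (intro continuous_intros indefinite_integral_continuous_1)
  moreover have "f 0 + integral {0..t} g = f t" if "t \<in> {0..T}" for t
  proof -
    have "(g has_integral (f t - f 0)) {0..t}" using assms that by (simp add: primitive_on_def)
    then show ?thesis by (simp add: integral_unique)
  qed
  ultimately show ?thesis by (rule continuous_on_eq)
qed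

lemma primitive_on_lincomb:
  assumes "primitive_on T g1 f1" "primitive_on T g2 f2"
    and "\<And>s. g s = c1 * g1 s + c2 * g2 s" "\<And>s. f s = c1 * f1 s + c2 * f2 s"
  shows "primitive_on T g f"
  unfolding primitive_on_def
proof
  fix t assume "t \<in> {0..T}"
  then have "((\<lambda>s. c1 * g1 s + c2 * g2 s) has_integral (c1 * (f1 t - f1 0) + c2 * (f2 t - f2 0))) {0..t}"
    using assms(1,2) by (intro has_integral_add has_integral_mult_right) (auto simp: primitive_on_def)
  moreover have "g = (\<lambda>s. c1 * g1 s + c2 * g2 s)" using assms(3) by auto
  moreover have "c1 * (f1 t - f1 0) + c2 * (f2 t - f2 0) = f t - f 0"
    by (simp add: assms(4) algebra_simps)
  ultimately show "(g has_integral (f t - f 0)) {0..t}" by simp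
qed

lemma primitive_on_uminus:
  assumes "primitive_on T g f"
  shows "primitive_on T (\<lambda>s. - g s) (\<lambda>s. - f s)"
  unfolding primitive_on_def
proof
  fix t assume "t \<in> {0..T}"
  then have "(g has_integral (f t - f 0)) {0..t}" using assms by (simp add: primitive_on_def)
  from has_integral_neg[OF this] show "((\<lambda>s. - g s) has_integral (- f t - - f 0)) {0..t}" by simp
qed

lemma nonneg_le_contraction_imp_zero:
  fixes M c :: real
  assumes "M \<le> c * M" "0 \<le> M" "c < 1"
  shows "M = 0"
proof (rule ccontr)
  assume "M \<noteq> 0"
  then have "c * M < 1 * M" using assms(2,3) by (intro mult_strict_right_mono) auto
  then show False using assms(1) by simp
qed

lemma vanishes_on_short_interval:
  fixes f g :: "real \<Rightarrow> real"
  assumes "c \<in> {p..q}" "f c = 0" "0 \<le> K" "K * (q - p) < 1"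
    and cont: "continuous_on {p..q} f"
    and incr: "\<And>u v. p \<le> u \<Longrightarrow> u \<le> v \<Longrightarrow> v \<le> q \<Longrightarrow> (g has_integral (f v - f u)) {u..v}"
    and rate: "AE x in lborel. x \<in> {p..q} \<longrightarrow> \<bar>g x\<bar> \<le> K * \<bar>f x\<bar>"
  shows "\<forall>t\<in>{p..q}. f t = 0"
proof -
  obtain r where r: "r \<in> {p..q}" "\<And>t. t \<in> {p..q} \<Longrightarrow> \<bar>f t\<bar> \<le> \<bar>f r\<bar>"
    using continuous_attains_sup[OF compact_Icc _ continuous_on_rabs[OF cont]] assms(1) by fastforce
  define M where "M = \<bar>f r\<bar>"
  have g_bound: "AE x in lborel. x \<in> {p..q} \<longrightarrow> \<bar>g x\<bar> \<le> K * M"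
  proof (rule AE_mp[OF rate], intro AE_I2 impI)
    fix x assume "x \<in> {p..q}" "x \<in> {p..q} \<longrightarrow> \<bar>g x\<bar> \<le> K * \<bar>f x\<bar>"
    moreover have "K * \<bar>f x\<bar> \<le> K * M" using r(2) \<open>x \<in> {p..q}\<close> assms(3) by (simp add: M_def mult_left_mono)
    ultimately show "\<bar>g x\<bar> \<le> K * M" by linarith
  qed
  have incr_bound: "\<bar>f v - f u\<bar> \<le> K * M * (v - u)" if "p \<le> u" "u \<le> v" "v \<le> q" for u v
  proof -
    have "AE x in lborel. x \<in> {u..v} \<longrightarrow> g x \<le> K * M"
      by (rule AE_mp[OF g_bound]) (use that in \<open>auto intro!: AE_I2\<close>)
    moreover have "AE x in lborel. x \<in> {u..v} \<longrightarrow> - (K * M) \<le> g x"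
      by (rule AE_mp[OF g_bound]) (use that in \<open>auto intro!: AE_I2\<close>)
    ultimately show ?thesis
      using has_integral_le_const_AE[OF incr[OF that] that(2), of "K * M"]
        has_integral_ge_const_AE[OF incr[OF that] that(2), of "- (K * M)"] by (simp add: abs_le_iff)
  qed
  have "M \<le> K * M * (q - p)"
  proof (cases "c \<le> r")
    case True
    then have "M \<le> K * M * (r - c)" using incr_bound[of c r] assms(1,2) r(1) by (simp add: M_def)
    also have "\<dots> \<le> K * M * (q - p)" using assms(1,3) r(1) by (intro mult_left_mono) (auto simp: M_def)
    finally show ?thesis .
  next
    case False
    then have "M \<le> K * M * (c - r)" using incr_bound[of r c] assms(1,2) r(1) by (simp add: M_def)
    also have "\<dots> \<le> K * M * (q - p)" using assms(1,3) r(1) by (intro mult_left_mono) (auto simp: M_def)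
    finally show ?thesis .
  qed
  then have "M \<le> (K * (q - p)) * M" by (simp add: algebra_simps)
  then have "M = 0" by (rule nonneg_le_contraction_imp_zero) (simp_all add: M_def assms(4))
  then show ?thesis using r(2) by (auto simp: M_def)
qed

lemma vanishes_on_short_interval_nonpos:
  fixes f g :: "real \<Rightarrow> real"
  assumes "f p = 0" "\<And>t. t \<in> {p..q} \<Longrightarrow> f t \<le> 0" "0 \<le> K" "K * (q - p) < 1"
    and cont: "continuous_on {p..q} f"
    and incr: "\<And>v. p \<le> v \<Longrightarrow> v \<le> q \<Longrightarrow> (g has_integral (f v - f p)) {p..v}"
    and rate: "AE x in lborel. x \<in> {p..q} \<longrightarrow> K * f x \<le> g x"
  shows "\<forall>t\<in>{p..q}. f t = 0"
proof (cases "p \<le> q")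
  case True
  obtain r where r: "r \<in> {p..q}" "\<And>t. t \<in> {p..q} \<Longrightarrow> - f t \<le> - f r"
    using continuous_attains_sup[OF compact_Icc _ continuous_on_minus[OF cont]] True by fastforce
  define M where "M = - f r"
  have "AE x in lborel. x \<in> {p..r} \<longrightarrow> - (K * M) \<le> g x"
  proof (rule AE_mp[OF rate], intro AE_I2 impI)
    fix x assume x: "x \<in> {p..r}" "x \<in> {p..q} \<longrightarrow> K * f x \<le> g x"
    then have "x \<in> {p..q}" using r(1) by auto
    moreover have "- (K * M) \<le> K * f x" using r(2)[OF \<open>x \<in> {p..q}\<close>] assms(3) by (simp add: M_def mult_left_mono)
    ultimately show "- (K * M) \<le> g x" using x(2) by linarith
  qed
  then have "- (K * M) * (r - p) \<le> f r - f p"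
    using r(1) by (intro has_integral_ge_const_AE[OF incr]) auto
  then have "M \<le> K * M * (r - p)" using assms(1) by (simp add: M_def)
  also have "\<dots> \<le> K * M * (q - p)"
    using assms(2,3) r(1) by (intro mult_left_mono mult_nonneg_nonneg) (auto simp: M_def)
  finally have "M \<le> (K * (q - p)) * M" by (simp add: algebra_simps)
  then have "M = 0" by (rule nonneg_le_contraction_imp_zero) (use assms(2,4) r(1) in \<open>simp_all add: M_def\<close>)
  then show ?thesis using r(2) assms(2) by (force simp: M_def)
qed simp

lemma primitive_on_vanishes:
  assumes f: "primitive_on T g f" and "c \<in> {0..T}" "f c = 0" "0 < \<delta>" "0 \<le> K"
    and rate: "AE t in lborel. t \<in> {0..T} \<longrightarrow> \<bar>f t\<bar> < \<delta> \<longrightarrow> \<bar>g t\<bar> \<le> K * \<bar>f t\<bar>"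
  shows "\<forall>t\<in>{0..T}. f t = 0"
proof -
  \<comment> \<open>The zero set is closed, and relatively open in \<open>{0..T}\<close> by \<open>vanishes_on_short_interval\<close>.\<close>
  define Z where "Z = {t \<in> {0..T}. f t = 0}"
  have cont: "continuous_on {0..T} f" using f by (rule primitive_on_continuous)
  have "openin (top_of_set {0..T}) Z"
    unfolding openin_euclidean_subtopology_iff
  proof (intro conjI ballI)
    fix s assume "s \<in> Z"
    then have s: "s \<in> {0..T}" "f s = 0" by (auto simp: Z_def)
    obtain e where "e > 0" and e: "\<And>t. t \<in> {0..T} \<Longrightarrow> dist t s < e \<Longrightarrow> \<bar>f t\<bar> < \<delta>"
      using cont s assms(4) unfolding continuous_on_iff by (metis dist_real_def diff_zero)
    define d where "d = min (e / 2) (1 / (2 * (K + 1)))"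
    define p where "p = max 0 (s - d)"
    define q where "q = min T (s + d)"
    have "d > 0" using \<open>e > 0\<close> assms(5) by (simp add: d_def)
    have "K * (q - p) \<le> K * (2 * d)" using assms(5) by (intro mult_left_mono) (auto simp: p_def q_def)
    also have "\<dots> \<le> K * (1 / (K + 1))"
    proof (intro mult_left_mono)
      have "d \<le> 1 / (2 * (K + 1))" by (simp add: d_def)
      then show "2 * d \<le> 1 / (K + 1)" using assms(5) by (simp add: field_simps)
    qed (use assms(5) in simp)
    also have "\<dots> < 1" using assms(5) by simp
    finally have short: "K * (q - p) < 1" .
    have "AE t in lborel. t \<in> {p..q} \<longrightarrow> \<bar>g t\<bar> \<le> K * \<bar>f t\<bar>"
    proof (rule AE_mp[OF rate], intro AE_I2 impI)
      fix t assume t: "t \<in> {p..q}" and "t \<in> {0..T} \<longrightarrow> \<bar>f t\<bar> < \<delta> \<longrightarrow> \<bar>g t\<bar> \<le> K * \<bar>f t\<bar>"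
      moreover have "t \<in> {0..T}" "dist t s < e"
        using t \<open>e > 0\<close> by (auto simp: p_def q_def d_def dist_real_def)
      ultimately show "\<bar>g t\<bar> \<le> K * \<bar>f t\<bar>" using e by blast
    qed
    then have "\<forall>t\<in>{p..q}. f t = 0"
      using s \<open>d > 0\<close> short assms(5)
      by (intro vanishes_on_short_interval[of s _ _ f K g] continuous_on_subset[OF cont]
          primitive_on_has_integral[OF f]) (auto simp: p_def q_def)
    then show "\<exists>d>0. \<forall>t\<in>{0..T}. dist t s < d \<longrightarrow> t \<in> Z"
      using \<open>d > 0\<close> by (intro exI[of _ d]) (auto simp: Z_def p_def q_def dist_real_def abs_less_iff)
  qed (auto simp: Z_def)
  moreover have "closedin (top_of_set {0..T}) Z"
    unfolding Z_def by (rule continuous_closedin_preimage_constant[OF cont])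
  moreover have "Z \<noteq> {}" using assms(2,3) by (auto simp: Z_def)
  ultimately have "Z = {0..T}" using connected_clopen[of "{0..T::real}"] by auto
  then show ?thesis by (auto simp: Z_def)
qed

lemma primitive_on_pos:
  assumes f: "primitive_on T g f" and "c \<in> {0..T}" "0 < f c" "0 \<le> K"
    and rate: "AE t in lborel. t \<in> {0..T} \<longrightarrow> \<bar>g t\<bar> \<le> K * \<bar>f t\<bar>"
  shows "\<forall>t\<in>{0..T}. 0 < f t"
proof (rule ccontr)
  assume "\<not> ?thesis"
  then obtain t where t: "t \<in> {0..T}" "f t \<le> 0" by force
  have "connected (f ` {0..T})"
    by (rule connected_continuous_image[OF primitive_on_continuous[OF f] connected_Icc])
  then have "{f t..f c} \<subseteq> f ` {0..T}"
    using t assms(2) by (intro connected_contains_Icc) auto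
  then obtain z where "z \<in> {0..T}" "f z = 0" using t assms(3) by force
  moreover have "AE t in lborel. t \<in> {0..T} \<longrightarrow> \<bar>f t\<bar> < 1 \<longrightarrow> \<bar>g t\<bar> \<le> K * \<bar>f t\<bar>"
    using rate by (auto elim: AE_mp)
  ultimately have "\<forall>t\<in>{0..T}. f t = 0" using assms(4) by (intro primitive_on_vanishes[OF f]) auto
  then have "f c = 0" using assms(2) by blast
  then show False using assms(3) by simp
qed

lemma primitive_on_neg:
  assumes f: "primitive_on T g f" and "f T < 0" "0 \<le> K"
    and rate: "AE t in lborel. t \<in> {0..T} \<longrightarrow> f t \<le> 0 \<longrightarrow> K * f t \<le> g t"
  shows "\<forall>t\<in>{0..T}. f t < 0"
proof (rule ccontr)
  assume "\<not> ?thesis"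
  then obtain t0 where t0: "t0 \<in> {0..T}" "0 \<le> f t0" by force
  have cont: "continuous_on {t0..T} f"
    by (rule continuous_on_subset[OF primitive_on_continuous[OF f]]) (use t0 in auto)
  \<comment> \<open>\<open>s\<close> is the last time at which \<open>f\<close> is nonnegative; the rate bound keeps \<open>f\<close> at zero just after it.\<close>
  define S where "S = {t0..T} \<inter> f -` {0..}"
  define s where "s = Sup S"
  have "s \<in> S" unfolding s_def
    by (rule closed_contains_Sup) (use t0 cont in \<open>auto simp: S_def intro: continuous_closed_preimage\<close>)
  then have s: "t0 \<le> s" "s < T" "0 \<le> f s"
    using assms(2) by (auto simp: S_def order.order_iff_strict)
  have after: "f t < 0" if "s < t" "t \<le> T" for t
  proof (rule ccontr)
    assume "\<not> f t < 0"
    then have "t \<in> S" using that s by (auto simp: S_def)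
    then have "t \<le> s" unfolding s_def by (rule cSup_upper) (auto simp: S_def)
    then show False using that(1) by simp
  qed
  have "f s = 0"
  proof (rule ccontr)
    assume "f s \<noteq> 0"
    moreover obtain z where "s \<le> z" "z \<le> T" "f z = 0"
      using IVT2'[of f T 0 s] assms(2) s cont by (force intro: continuous_on_subset)
    ultimately show False using after s(3) by (cases "z = s") force+
  qed
  define q where "q = min T (s + 1 / (K + 1))"
  have "s < q" using s(2) assms(3) by (simp add: q_def)
  have "K * (q - s) \<le> K * (1 / (K + 1))" using assms(3) by (intro mult_left_mono) (auto simp: q_def)
  also have "\<dots> < 1" using assms(3) by simp
  finally have short: "K * (q - s) < 1" .
  have nonpos: "\<And>t. t \<in> {s..q} \<Longrightarrow> f t \<le> 0"
    using after \<open>f s = 0\<close> by (force simp: q_def)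
  have "AE t in lborel. t \<in> {s..q} \<longrightarrow> K * f t \<le> g t"
    using rate by (rule AE_mp) (use nonpos t0 s in \<open>auto simp: q_def intro!: AE_I2\<close>)
  then have "\<forall>t\<in>{s..q}. f t = 0"
    using t0 s \<open>f s = 0\<close> nonpos assms(3) short
    by (intro vanishes_on_short_interval_nonpos[of f s q K g] continuous_on_subset[OF cont]
        primitive_on_has_integral[OF f]) (auto simp: q_def)
  then show False using after[of q] \<open>s < q\<close> by (auto simp: q_def)
qed

lemma trajectory_primitive_on:
  assumes "trajectory T a1 a2 x1 x2"
  shows "primitive_on T (\<lambda>s. - x1 s + (1 - a1 s) * xbar (x1 s) (x2 s)) x1"
    and "primitive_on T (\<lambda>s. - x2 s + (1 - a2 s) * xbar (x1 s) (x2 s)) x2"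
  using assms by (auto simp: trajectory_def primitive_on_def)

lemma costate_primitive_on:
  assumes "costate T a1 a2 x1 x2 l1 l2"
  shows "primitive_on T (\<lambda>s. (1 + a1 s) / 2 * l1 s - (1 - a2 s) / 2 * l2 s) l1"
    and "primitive_on T (\<lambda>s. (1 + a2 s) / 2 * l2 s - (1 - a1 s) / 2 * l1 s) l2"
  using assms by (auto simp: costate_def primitive_on_def)

lemma mean_state_pos:
  assumes "admissible T a1 a2" "trajectory T a1 a2 x1 x2" "0 < xbar (x1 0) (x2 0)"
  shows "\<forall>t\<in>{0..T}. 0 < xbar (x1 t) (x2 t)"
proof (cases "0 \<le> T")
  case True
  have "primitive_on T (\<lambda>s. - ((a1 s + a2 s) / 2) * xbar (x1 s) (x2 s)) (\<lambda>s. xbar (x1 s) (x2 s))"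
    by (rule primitive_on_lincomb[OF trajectory_primitive_on[OF assms(2)], of _ "1/2" "1/2"])
      (simp_all add: xbar_def field_simps)
  moreover have "AE t in lborel. t \<in> {0..T} \<longrightarrow>
      \<bar>- ((a1 t + a2 t) / 2) * xbar (x1 t) (x2 t)\<bar> \<le> 1 * \<bar>xbar (x1 t) (x2 t)\<bar>"
  proof (intro AE_I2 impI)
    fix t assume "t \<in> {0..T}"
    then have "\<bar>(a1 t + a2 t) / 2\<bar> \<le> 1" using assms(1) by (auto simp: admissible_def)
    then show "\<bar>- ((a1 t + a2 t) / 2) * xbar (x1 t) (x2 t)\<bar> \<le> 1 * \<bar>xbar (x1 t) (x2 t)\<bar>"
      unfolding abs_mult abs_minus_cancel by (intro mult_right_mono) auto
  qed
  ultimately show ?thesis using True assms(3) by (intro primitive_on_pos[where c = 0 and K = 1]) auto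
qed simp

lemma min_condition_saturates:
  assumes "admissible T a1 a2" "min_condition T a1 a2 x1 x2 l1 l2"
    and "\<forall>t\<in>{0..T}. 0 < xbar (x1 t) (x2 t)"
  shows "AE t in lborel. t \<in> {0..T} \<longrightarrow> 0 < l1 t \<longrightarrow> a1 t = 1"
  using assms(2) unfolding min_condition_def
proof (rule AE_mp, intro AE_I2 impI)
  fix t assume t: "t \<in> {0..T}" "0 < l1 t"
    and min: "t \<in> {0..T} \<longrightarrow> (\<forall>b1 b2. 0 \<le> b1 \<and> b1 \<le> 1 \<and> 0 \<le> b2 \<and> b2 \<le> 1 \<and> b1 + b2 \<le> 2 \<longrightarrow>
       - xbar (x1 t) (x2 t) * (a1 t * l1 t + a2 t * l2 t) \<le> - xbar (x1 t) (x2 t) * (b1 * l1 t + b2 * l2 t))"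
  have a: "0 \<le> a1 t" "a1 t \<le> 1" "0 \<le> a2 t" "a2 t \<le> 1" using assms(1) t(1) by (auto simp: admissible_def)
  have "- xbar (x1 t) (x2 t) * (a1 t * l1 t + a2 t * l2 t) \<le> - xbar (x1 t) (x2 t) * (1 * l1 t + a2 t * l2 t)"
    using min t(1) a by (intro min[rule_format]) auto
  then have "xbar (x1 t) (x2 t) * l1 t \<le> xbar (x1 t) (x2 t) * (a1 t * l1 t)"
    by (simp add: algebra_simps)
  then have "l1 t \<le> a1 t * l1 t" using assms(3) t(1) by (simp add: mult_le_cancel_left_pos)
  then show "a1 t = 1" using t(2) a(2) by (simp add: mult_le_cancel_right2)
qed

lemma costate2_rate_bounds:
  fixes a1 a2 l1 l2 :: real
  assumes "0 \<le> a1" "a1 \<le> 1" "0 \<le> a2" "a2 \<le> 1" "0 < l1 \<longrightarrow> a1 = 1"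
  shows "l2 \<le> 0 \<Longrightarrow> l2 \<le> (1 + a2) / 2 * l2 - (1 - a1) / 2 * l1"
    and "0 \<le> l1 \<Longrightarrow> 0 \<le> l2 \<Longrightarrow> (1 + a2) / 2 * l2 - (1 - a1) / 2 * l1 \<le> l2"
    and "0 < l1 \<Longrightarrow> \<bar>(1 + a2) / 2 * l2 - (1 - a1) / 2 * l1\<bar> \<le> \<bar>l2\<bar>"
proof -
  have switch: "(1 - a1) * l1 \<le> 0" "0 \<le> l1 \<Longrightarrow> (1 - a1) * l1 = 0"
    using assms(2,5) mult_nonneg_nonpos[of "1 - a1" l1] by (cases "0 < l1"; force)+
  have factor: "0 \<le> (1 + a2) / 2" "(1 + a2) / 2 \<le> 1" using assms(3,4) by auto
  show "l2 \<le> (1 + a2) / 2 * l2 - (1 - a1) / 2 * l1" if "l2 \<le> 0"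
    using mult_right_mono_neg[OF factor(2) that] switch(1) by simp
  show "(1 + a2) / 2 * l2 - (1 - a1) / 2 * l1 \<le> l2" if "0 \<le> l1" "0 \<le> l2"
  proof -
    have "(1 - a1) / 2 * l1 = 0" using switch(2)[OF that(1)] by simp
    then show ?thesis using mult_right_mono[OF factor(2) that(2)] by linarith
  qed
  show "\<bar>(1 + a2) / 2 * l2 - (1 - a1) / 2 * l1\<bar> \<le> \<bar>l2\<bar>" if "0 < l1"
    using mult_right_mono[OF factor(2), of "\<bar>l2\<bar>"] switch(2) that factor(1) by (simp add: abs_mult)
qed

locale pmp_costate =
  fixes T :: real and a1 a2 l1 l2 :: "real \<Rightarrow> real"
  assumes T_nonneg: "0 \<le> T"
    and controls: "\<And>t. t \<in> {0..T} \<Longrightarrow> 0 \<le> a1 t \<and> a1 t \<le> 1 \<and> 0 \<le> a2 t \<and> a2 t \<le> 1"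
    and saturated: "AE t in lborel. t \<in> {0..T} \<longrightarrow> 0 < l1 t \<longrightarrow> a1 t = 1"
    and costate1: "primitive_on T (\<lambda>s. (1 + a1 s) / 2 * l1 s - (1 - a2 s) / 2 * l2 s) l1"
    and costate2: "primitive_on T (\<lambda>s. (1 + a2 s) / 2 * l2 s - (1 - a1 s) / 2 * l1 s) l2"
    and terminal_gap: "l2 T \<le> l1 T"
begin

lemma gap_primitive: "primitive_on T (\<lambda>s. l1 s - l2 s) (\<lambda>s. l1 s - l2 s)"
  by (rule primitive_on_lincomb[OF costate1 costate2, of _ 1 "-1"]) (simp_all add: field_simps)

lemma gap_pos: "l2 T < l1 T \<Longrightarrow> \<forall>t\<in>{0..T}. l2 t < l1 t"
  using primitive_on_pos[OF gap_primitive, of T 1] T_nonneg by auto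

lemma gap_nonneg: "\<forall>t\<in>{0..T}. l2 t \<le> l1 t"
proof (cases "l2 T < l1 T")
  case False
  then have "\<forall>t\<in>{0..T}. l1 t - l2 t = 0"
    using terminal_gap T_nonneg by (intro primitive_on_vanishes[OF gap_primitive, of T 1 1]) auto
  then show ?thesis by auto
qed (use gap_pos in fastforce)

lemma costate2_rate_ge:
  "AE t in lborel. t \<in> {0..T} \<longrightarrow> l2 t \<le> 0 \<longrightarrow>
     1 * l2 t \<le> (1 + a2 t) / 2 * l2 t - (1 - a1 t) / 2 * l1 t"
  using saturated by (rule AE_mp) (use controls costate2_rate_bounds(1) in \<open>auto intro!: AE_I2\<close>)

lemma costate2_rate_le:
  "AE t in lborel. t \<in> {0..T} \<longrightarrow> - l2 t \<le> 0 \<longrightarrow>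
     1 * - l2 t \<le> - ((1 + a2 t) / 2 * l2 t - (1 - a1 t) / 2 * l1 t)"
proof (rule AE_mp[OF saturated], intro AE_I2 impI)
  fix t assume t: "t \<in> {0..T}" "- l2 t \<le> 0" and "t \<in> {0..T} \<longrightarrow> 0 < l1 t \<longrightarrow> a1 t = 1"
  moreover have "0 \<le> l1 t" using gap_nonneg[rule_format, of t] t by linarith
  ultimately show "1 * - l2 t \<le> - ((1 + a2 t) / 2 * l2 t - (1 - a1 t) / 2 * l1 t)"
    using controls[OF t(1)] costate2_rate_bounds(2)[of "a1 t" "a2 t" "l1 t" "l2 t"] by auto
qed

lemma costate2_rate_abs_le:
  "AE t in lborel. t \<in> {0..T} \<longrightarrow> 0 < l1 t \<longrightarrow>
     \<bar>(1 + a2 t) / 2 * l2 t - (1 - a1 t) / 2 * l1 t\<bar> \<le> 1 * \<bar>l2 t\<bar>"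
  using saturated by (rule AE_mp) (use controls costate2_rate_bounds(3) in \<open>auto intro!: AE_I2\<close>)

lemma l2_pos: "0 < l2 T \<Longrightarrow> \<forall>t\<in>{0..T}. 0 < l2 t"
  using primitive_on_neg[OF primitive_on_uminus[OF costate2] _ _ costate2_rate_le] by auto

lemma l2_neg: "l2 T < 0 \<Longrightarrow> \<forall>t\<in>{0..T}. l2 t < 0"
  using primitive_on_neg[OF costate2 _ _ costate2_rate_ge] by auto

lemma l2_zero:
  assumes "l2 T = 0" "l2 T < l1 T"
  shows "\<forall>t\<in>{0..T}. l2 t = 0"
proof -
  obtain r where r: "r \<in> {0..T}" "\<And>t. t \<in> {0..T} \<Longrightarrow> l1 r - l2 r \<le> l1 t - l2 t"
    using continuous_attains_inf[OF compact_Icc _ primitive_on_continuous[OF gap_primitive]] T_nonneg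
    by fastforce
  define \<gamma> where "\<gamma> = l1 r - l2 r"
  \<comment> \<open>Since \<open>l1 - l2 \<ge> \<gamma> > 0\<close>, the bound \<open>|l2'| \<le> |l2|\<close> holds wherever \<open>|l2| < \<gamma>\<close>.\<close>
  have "0 < \<gamma>" using gap_pos assms(2) r(1) by (simp add: \<gamma>_def)
  moreover have "AE t in lborel. t \<in> {0..T} \<longrightarrow> \<bar>l2 t\<bar> < \<gamma> \<longrightarrow>
      \<bar>(1 + a2 t) / 2 * l2 t - (1 - a1 t) / 2 * l1 t\<bar> \<le> 1 * \<bar>l2 t\<bar>"
  proof (rule AE_mp[OF costate2_rate_abs_le], intro AE_I2 impI)
    fix t assume t: "t \<in> {0..T}" "\<bar>l2 t\<bar> < \<gamma>"
    then have "0 < l1 t" using r(2)[OF t(1)] by (simp add: \<gamma>_def)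
    moreover assume "t \<in> {0..T} \<longrightarrow> 0 < l1 t \<longrightarrow>
      \<bar>(1 + a2 t) / 2 * l2 t - (1 - a1 t) / 2 * l1 t\<bar> \<le> 1 * \<bar>l2 t\<bar>"
    ultimately show "\<bar>(1 + a2 t) / 2 * l2 t - (1 - a1 t) / 2 * l1 t\<bar> \<le> 1 * \<bar>l2 t\<bar>"
      using t(1) by blast
  qed
  ultimately show ?thesis
    using T_nonneg assms(1) by (intro primitive_on_vanishes[OF costate2, where c = T and K = 1]) auto
qed

end

theorem proposition6:
  fixes T :: real and a1 a2 x1 x2 l1 l2 :: "real \<Rightarrow> real"
  assumes "T > 0"
    and "xbar (x1 0) (x2 0) > 0"
    and "x1 0 > x2 0"
    and "optimal T a1 a2 x1 x2"
    and "\<forall>t\<in>{0..T}. x1 t \<ge> x2 t"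
    and "costate T a1 a2 x1 x2 l1 l2"
    and "min_condition T a1 a2 x1 x2 l1 l2"
  shows "(l2 T > 0 \<longrightarrow> (\<forall>t\<in>{0..T}. l1 t > 0 \<and> l2 t > 0))
       \<and> (l2 T = 0 \<longrightarrow> (\<forall>t\<in>{0..T}. l1 t > 0 \<and> l2 t = 0))
       \<and> (l2 T < 0 \<longrightarrow> (\<forall>t\<in>{0..T}. l2 t < 0))"
proof -
  have adm: "admissible T a1 a2" and traj: "trajectory T a1 a2 x1 x2"
    using assms(4) by (auto simp: optimal_def)
  have mean_pos: "\<forall>t\<in>{0..T}. 0 < xbar (x1 t) (x2 t)"
    by (rule mean_state_pos[OF adm traj assms(2)])
  have terminal: "l1 T = x1 T" "l2 T = x2 T" using assms(6) by (auto simp: costate_def)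
  interpret pmp_costate T a1 a2 l1 l2
  proof
    show "AE t in lborel. t \<in> {0..T} \<longrightarrow> 0 < l1 t \<longrightarrow> a1 t = 1"
      by (rule min_condition_saturates[OF adm assms(7) mean_pos])
  qed (use assms(1,5) adm terminal costate_primitive_on[OF assms(6)] in \<open>auto simp: admissible_def\<close>)
  have "l2 T < l1 T" if "l2 T = 0"
    using mean_pos[rule_format, of T] assms(1) that terminal by (simp add: xbar_def)
  then show ?thesis
    using l2_pos l2_zero l2_neg gap_nonneg gap_pos by fastforce
qed

end
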